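(* Let $C$ be a commutative ring and work in the free associative $C$-algebra $C\{x,t\}$ on noncommuting indeterminates $x_1,\dots,x_{n+1}$, $t_1,t_2,\dots$ and $z$. Let $f(x_1,\dots,x_n,x_{n+1})$ (possibly involving the $t_i$ but not $z$) be multilinear in $x_1,\dots,x_{n+1}$ and alternating in $x_1,\dots,x_n$. Then $$\sum_{j=0}^n(-1)^j\sum_{\substack{S\subseteq\{1,\dots,n\}\\|S|=j}} f\big(x_1^{S},\dots,x_n^{S},\,z^{n-j}x_{n+1}\big)\in\mathcal{CAP}_{n+1},$$ where $x_i^S=zx_i$ if $i\in S$ and $x_i^S=x_i$ otherwise. (In the paper's notation: $\sum_{j=0}^n(-1)^j\delta^{(x,n)}_{j,z}(f(x_1,\dots,x_n,z^{n-j}x_{n+1}))\equiv0$ modulo $\mathcal{CAP}_{n+1}$, where $\delta^{(x,n)}_{j,z}$ substitutes $z$ in front of $j$ of the first $n$ arguments only.)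
   Context: $\mathrm{Cap}_{m}(x_1,\dots,x_m;y_1,\dots,y_m)=\sum_{\pi\in S_m}\operatorname{sgn}(\pi)x_{\pi(1)}y_1\cdots x_{\pi(m)}y_m$. $\mathcal{CAP}_{n+1}$ denotes the T-ideal of the free algebra generated by $\mathrm{Cap}_{n+1}$, i.e. the smallest ideal containing $\mathrm{Cap}_{n+1}$ and closed under all substitutions of indeterminates by elements of the free algebra. A polynomial multilinear in $x_1,\dots,x_n$ is alternating in them if interchanging any two of them negates it. *)

theory Defs
  imports "HOL-Combinatorics.Permutations"
begin

text \<open>Indeterminates of the free algebra: x_i, t_i, auxiliary y_i (used only to
write down the generator Cap of the T-ideal), and z.\<close>
datatype var = X nat | T nat | Y nat | Z

text \<open>Elements of the free associative C-algebra: coefficient functions on words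
(noncommutative monomials) with finite support.\<close>
type_synonym 'c fa = "var list \<Rightarrow> 'c"

definition fpoly :: "'c::comm_ring_1 fa \<Rightarrow> bool" where
  "fpoly p \<longleftrightarrow> finite {w. p w \<noteq> 0}"

definition fmon :: "var list \<Rightarrow> 'c::comm_ring_1 fa" where
  "fmon w = (\<lambda>u. if u = w then 1 else 0)"

definition fadd :: "'c::comm_ring_1 fa \<Rightarrow> 'c fa \<Rightarrow> 'c fa" where
  "fadd p q = (\<lambda>w. p w + q w)"

definition fmul :: "'c::comm_ring_1 fa \<Rightarrow> 'c fa \<Rightarrow> 'c fa" where
  "fmul p q = (\<lambda>w. \<Sum>i\<le>length w. p (take i w) * q (drop i w))"

definition fprod_list :: "'c::comm_ring_1 fa list \<Rightarrow> 'c fa" where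
  "fprod_list ps = foldr fmul ps (fmon [])"

text \<open>Substitution of indeterminates by elements of the free algebra
(the algebra endomorphism determined by \<sigma>).\<close>
definition fsubst :: "(var \<Rightarrow> 'c::comm_ring_1 fa) \<Rightarrow> 'c fa \<Rightarrow> 'c fa" where
  "fsubst \<sigma> p = (\<lambda>u. \<Sum>w\<in>{w. p w \<noteq> 0}. p w * fprod_list (map \<sigma> w) u)"

definition fcap :: "nat \<Rightarrow> (nat \<Rightarrow> 'c::comm_ring_1 fa) \<Rightarrow> (nat \<Rightarrow> 'c fa) \<Rightarrow> 'c fa" where
  "fcap m xs ys = (\<lambda>u. \<Sum>\<pi>\<in>{\<pi>. \<pi> permutes {1..m}}.
      of_int (sign \<pi>) * fprod_list (concat (map (\<lambda>i. [xs (\<pi> i), ys i]) [1..<m+1])) u)"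

inductive_set tideal :: "'c::comm_ring_1 fa \<Rightarrow> 'c fa set" for g where
  gen: "g \<in> tideal g"
| zero: "(\<lambda>_. 0) \<in> tideal g"
| add: "a \<in> tideal g \<Longrightarrow> b \<in> tideal g \<Longrightarrow> fadd a b \<in> tideal g"
| lmul: "a \<in> tideal g \<Longrightarrow> fpoly p \<Longrightarrow> fmul p a \<in> tideal g"
| rmul: "a \<in> tideal g \<Longrightarrow> fpoly p \<Longrightarrow> fmul a p \<in> tideal g"
| subst: "a \<in> tideal g \<Longrightarrow> (\<forall>v. fpoly (\<sigma> v)) \<Longrightarrow> fsubst \<sigma> a \<in> tideal g"

definition CAP :: "nat \<Rightarrow> 'c::comm_ring_1 fa set" where
  "CAP m = tideal (fcap m (\<lambda>i. fmon [X i]) (\<lambda>i. fmon [Y i]))"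

definition in_x_t :: "nat \<Rightarrow> 'c::comm_ring_1 fa \<Rightarrow> bool" where
  "in_x_t k f \<longleftrightarrow> fpoly f \<and>
     (\<forall>w. f w \<noteq> 0 \<longrightarrow> set w \<subseteq> X ` {1..k} \<union> range T)"

definition multilinear :: "nat \<Rightarrow> 'c::comm_ring_1 fa \<Rightarrow> bool" where
  "multilinear k f \<longleftrightarrow> (\<forall>w. f w \<noteq> 0 \<longrightarrow> (\<forall>i\<in>{1..k}. count_list w (X i) = 1))"

definition swapx :: "nat \<Rightarrow> nat \<Rightarrow> var \<Rightarrow> var" where
  "swapx i j v = (if v = X i then X j else if v = X j then X i else v)"

definition alternating :: "nat \<Rightarrow> 'c::comm_ring_1 fa \<Rightarrow> bool" where
  "alternating n f \<longleftrightarrow> (\<forall>i\<in>{1..n}. \<forall>j\<in>{1..n}. i \<noteq> j \<longrightarrow>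
      fsubst (\<lambda>v. fmon [swapx i j v]) f = (\<lambda>w. - f w))"

definition delta_sub :: "nat \<Rightarrow> nat set \<Rightarrow> nat \<Rightarrow> var \<Rightarrow> 'c::comm_ring_1 fa" where
  "delta_sub n S j v = (case v of
      X i \<Rightarrow> (if i \<in> S \<and> i \<in> {1..n} then fmon [Z, X i]
             else if i = n + 1 then fmon (replicate (n - j) Z @ [X (n+1)])
             else fmon [X i])
    | _ \<Rightarrow> fmon [v])"

end

theory Submission
  imports Defs
begin

(* Put N = n + 1 and let h be f with x_N replaced by z^m x_N.  Alternating h over the cosets of
   Sym(n) in Sym(N), i.e. forming  SUM k. sgn(k N) * h o (k N),  gives a polynomial that is
   multilinear and alternating in x_1, ..., x_N.  Every such polynomial lies in CAP(N): grouping
   its monomials by the order in which x_1, ..., x_N occur writes it as a combination of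
   substitution instances  a * Cap_N(x; s_1, ..., s_N).  Now substitute z x_i for x_i (i in S)
   with m = n - |S| and sum with signs (-1)^|S| over S <= {1..n}.  In the coset term of k <= n
   the variable x_k ends up preceded by the same power of z whether or not k is in S, so these
   terms cancel between S and S - {k}; the surviving coset term k = N is exactly the left-hand
   side of the claim. *)

section \<open>Monomial substitutions\<close>

lemma bind_append [simp]: "List.bind (xs @ ys) g = List.bind xs g @ List.bind ys g"
  by (simp add: List.bind_def)

lemma bind_bind: "List.bind (List.bind w h) g = List.bind w (\<lambda>v. List.bind (h v) g)"
  by (induction w) auto

lemma bind_singleton [simp]: "List.bind w (\<lambda>v. [r v]) = map r w"
  by (induction w) auto

lemma fmon_apply: "fmon w u = (if w = u then 1 else 0)"
  by (auto simp: fmon_def)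

lemma fpoly_fmon: "fpoly (fmon w)"
  unfolding fpoly_def fmon_def by (rule finite_subset[of _ "{w}"]) auto

definition fcomb :: "'i set \<Rightarrow> ('i \<Rightarrow> 'c::comm_ring_1) \<Rightarrow> ('i \<Rightarrow> var list) \<Rightarrow> 'c fa" where
  "fcomb I c h = (\<lambda>u. \<Sum>i\<in>I. c i * fmon (h i) u)"

lemma fcomb_nonzero: "fcomb I c h u \<noteq> 0 \<Longrightarrow> \<exists>i\<in>I. h i = u"
  unfolding fcomb_def by (metis (mono_tags) fmon_apply mult_zero_right sum.neutral)

lemma fpoly_fcomb: "finite I \<Longrightarrow> fpoly (fcomb I c h)"
  unfolding fpoly_def using fcomb_nonzero[of I c h]
  by (blast intro: finite_subset[of _ "h ` I"])

lemma fcomb_support: "fpoly p \<Longrightarrow> fcomb {w. p w \<noteq> 0} p id = p"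
  by (rule ext) (simp add: fcomb_def fmon_apply fpoly_def if_distrib sum.delta' cong: if_cong)

lemma fmul_fmon_apply:
  "fmul (fmon a) q w = (if \<exists>r. w = a @ r then q (drop (length a) w) else 0)"
proof -
  have "fmul (fmon a) q w
      = (\<Sum>j\<le>length w. if j = length a then (if take j w = a then q (drop j w) else 0) else 0)"
    unfolding fmul_def by (rule sum.cong) (auto simp: fmon_apply)
  also have "\<dots> = (if length a \<le> length w \<and> take (length a) w = a then q (drop (length a) w) else 0)"
    by (simp add: sum.delta')
  finally show ?thesis by (metis append_eq_conv_conj append_take_drop_id nat_le_linear take_all)
qed

lemma fmul_fmon_fcomb: "fmul (fmon a) (fcomb I c h) = fcomb I c (\<lambda>i. a @ h i)"
  by (rule ext) (auto simp: fmul_fmon_apply fcomb_def fmon_apply intro!: sum.neutral)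

lemma fprod_list_fmon: "fprod_list (map (\<lambda>v. fmon (g v)) w) = fmon (List.bind w g)"
proof (induction w)
  case (Cons v w)
  have "fmul (fmon (g v)) (fmon (List.bind w g)) = fmon (g v @ List.bind w g)"
    using fmul_fmon_fcomb[of "g v" "{()}" "\<lambda>_. 1" "\<lambda>_. List.bind w g"]
    by (simp add: fcomb_def fun_eq_iff)
  with Cons show ?case by (simp add: fprod_list_def)
qed (simp add: fprod_list_def)

lemma fsubst_superset:
  assumes "finite W" "{w. p w \<noteq> 0} \<subseteq> W"
  shows "fsubst \<sigma> p u = (\<Sum>w\<in>W. p w * fprod_list (map \<sigma> w) u)"
  unfolding fsubst_def by (rule sum.mono_neutral_left) (use assms in auto)

lemma fsubst_fmon_fcomb:
  assumes "finite I"
  shows "fsubst (\<lambda>v. fmon (g v)) (fcomb I c h) = fcomb I c (\<lambda>i. List.bind (h i) g)"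
proof
  fix u
  have "fsubst (\<lambda>v. fmon (g v)) (fcomb I c h) u
      = (\<Sum>w\<in>h ` I. fcomb I c h w * fprod_list (map (\<lambda>v. fmon (g v)) w) u)"
    by (rule fsubst_superset) (use assms fcomb_nonzero in blast)+
  also have "\<dots> = (\<Sum>w\<in>h ` I. \<Sum>i\<in>I. c i * fmon (h i) w * fmon (List.bind w g) u)"
    by (simp add: fprod_list_fmon fcomb_def sum_distrib_right)
  also have "\<dots> = (\<Sum>i\<in>I. \<Sum>w\<in>h ` I. if w = h i then c i * fmon (List.bind w g) u else 0)"
    by (subst sum.swap, intro sum.cong refl) (auto simp: fmon_apply)
  also have "\<dots> = fcomb I c (\<lambda>i. List.bind (h i) g) u"
    using assms by (simp add: fcomb_def sum.delta')
  finally show "fsubst (\<lambda>v. fmon (g v)) (fcomb I c h) u = fcomb I c (\<lambda>i. List.bind (h i) g) u" .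
qed

lemma fsubst_fmon_eq_fcomb:
  "fpoly p \<Longrightarrow> fsubst (\<lambda>v. fmon (g v)) p = fcomb {w. p w \<noteq> 0} p (\<lambda>w. List.bind w g)"
  using fsubst_fmon_fcomb[of "{w. p w \<noteq> 0}" g p id] by (simp add: fcomb_support fpoly_def)

lemma fsubst_fmon_nonzero:
  "fpoly p \<Longrightarrow> fsubst (\<lambda>v. fmon (g v)) p u \<noteq> 0 \<Longrightarrow> \<exists>w. p w \<noteq> 0 \<and> List.bind w g = u"
  by (auto simp: fsubst_fmon_eq_fcomb dest: fcomb_nonzero)

lemma fpoly_fsubst_fmon: "fpoly p \<Longrightarrow> fpoly (fsubst (\<lambda>v. fmon (g v)) p)"
  by (simp add: fsubst_fmon_eq_fcomb) (rule fpoly_fcomb, simp add: fpoly_def)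

lemma fsubst_fmon_fsubst_fmon:
  assumes "fpoly p"
  shows "fsubst (\<lambda>v. fmon (g v)) (fsubst (\<lambda>v. fmon (h v)) p)
       = fsubst (\<lambda>v. fmon (List.bind (h v) g)) p"
  using assms by (simp add: fsubst_fmon_eq_fcomb fsubst_fmon_fcomb fpoly_def bind_bind)

lemma fsubst_involution:
  assumes "fpoly p" and "\<And>v. r (r v) = v"
  shows "fsubst (\<lambda>v. fmon [r v]) p u = p (map r u)"
proof -
  have "\<And>w. (map r w = u) = (w = map r u)"
    using assms(2) by (auto simp: map_idI comp_def)
  then have "fsubst (\<lambda>v. fmon [r v]) p u = (\<Sum>w\<in>{w. p w \<noteq> 0}. if w = map r u then p w else 0)"
    by (simp add: fsubst_fmon_eq_fcomb[OF assms(1)] fcomb_def fmon_apply if_distrib cong: if_cong)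
  also have "\<dots> = p (map r u)"
    using assms(1) by (simp add: fpoly_def sum.delta')
  finally show ?thesis .
qed

lemma fsubst_sum:
  assumes "finite K" "\<And>k. k \<in> K \<Longrightarrow> fpoly (p k)"
  shows "fsubst \<sigma> (\<lambda>u. \<Sum>k\<in>K. c k * p k u) u = (\<Sum>k\<in>K. c k * fsubst \<sigma> (p k) u)"
proof -
  define W where "W = (\<Union>k\<in>K. {w. p k w \<noteq> 0})"
  have W: "finite W" using assms by (auto simp: W_def fpoly_def)
  have "fsubst \<sigma> (\<lambda>u. \<Sum>k\<in>K. c k * p k u) u
      = (\<Sum>w\<in>W. (\<Sum>k\<in>K. c k * p k w) * fprod_list (map \<sigma> w) u)"
    by (rule fsubst_superset[OF W]) (auto simp: W_def intro: ccontr)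
  also have "\<dots> = (\<Sum>k\<in>K. c k * (\<Sum>w\<in>W. p k w * fprod_list (map \<sigma> w) u))"
    by (simp add: sum_distrib_left sum_distrib_right sum.swap[of _ W] mult.assoc)
  also have "\<dots> = (\<Sum>k\<in>K. c k * fsubst \<sigma> (p k) u)"
    by (rule sum.cong[OF refl], subst fsubst_superset[OF W]) (auto simp: W_def)
  finally show ?thesis .
qed

lemma tideal_smult: "a \<in> tideal g \<Longrightarrow> (\<lambda>u. c * a u) \<in> tideal g"
proof -
  assume a: "a \<in> tideal g"
  have "fmul (\<lambda>w. if w = [] then c else 0) a = (\<lambda>u. c * a u)"
  proof
    fix u
    have "fmul (\<lambda>w. if w = [] then c else 0) a u = (\<Sum>j\<le>length u. if j = 0 then c * a u else 0)"
      unfolding fmul_def by (rule sum.cong) auto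
    then show "fmul (\<lambda>w. if w = [] then c else 0) a u = c * a u" by simp
  qed
  moreover have "fpoly (\<lambda>w. if w = [] then c else 0)"
    unfolding fpoly_def by (rule finite_subset[of _ "{[]}"]) auto
  ultimately show ?thesis using tideal.lmul[OF a] by metis
qed

lemma tideal_sum:
  "finite I \<Longrightarrow> (\<And>i. i \<in> I \<Longrightarrow> q i \<in> tideal g) \<Longrightarrow> (\<lambda>u. \<Sum>i\<in>I. q i u) \<in> tideal g"
proof (induction I rule: finite_induct)
  case empty then show ?case by (simp add: tideal.zero)
next
  case (insert x F)
  then have "fadd (q x) (\<lambda>u. \<Sum>i\<in>F. q i u) \<in> tideal g" by (auto intro: tideal.add)
  with insert show ?case by (simp add: fadd_def)
qed

section \<open>Renaming x-variables; sign-alternating polynomials\<close>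

definition rename_x :: "(nat \<Rightarrow> nat) \<Rightarrow> var \<Rightarrow> var" where
  "rename_x \<pi> v = (case v of X i \<Rightarrow> X (\<pi> i) | _ \<Rightarrow> v)"

lemma rename_x_simps [simp]:
  "rename_x \<pi> (X i) = X (\<pi> i)" "rename_x \<pi> (T i) = T i" "rename_x \<pi> (Y i) = Y i" "rename_x \<pi> Z = Z"
  by (simp_all add: rename_x_def)

lemma rename_x_ident [simp]: "rename_x (\<lambda>i. i) v = v"
  by (cases v) auto

lemma rename_x_comp: "rename_x (p \<circ> q) = rename_x p \<circ> rename_x q"
  by (simp add: fun_eq_iff rename_x_def split: var.split)

lemma rename_x_inverse_comp:
  assumes "\<pi> permutes A"
  shows "rename_x (inv \<pi>) \<circ> rename_x \<pi> = id" "rename_x \<pi> \<circ> rename_x (inv \<pi>) = id"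
  by (simp_all add: fun_eq_iff rename_x_def permutes_inverses[OF assms] split: var.split)

lemma map_rename_x_eq_iff:
  "\<pi> permutes A \<Longrightarrow> map (rename_x (inv \<pi>)) x = y \<longleftrightarrow> x = map (rename_x \<pi>) y"
  using rename_x_inverse_comp by (metis list.map_comp list.map_id)

lemma rename_x_transpose_involution: "rename_x (transpose a b) (rename_x (transpose a b) v) = v"
  by (cases v) auto

lemma swapx_eq_rename_x: "swapx i j = rename_x (transpose i j)"
  by (simp add: fun_eq_iff swapx_def rename_x_def transpose_def split: var.split)

lemma inj_rename_x: "inj \<pi> \<Longrightarrow> inj (rename_x \<pi>)"
  unfolding inj_def rename_x_def by (auto split: var.split)

lemma count_list_rename_x:
  "inj \<pi> \<Longrightarrow> count_list (map (rename_x \<pi>) w) (X (\<pi> i)) = count_list w (X i)"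
  using count_list_map_conv[OF inj_rename_x, of \<pi> w "X i"] by simp

lemma count_list_bind: "count_list (List.bind w g) v = (\<Sum>u\<leftarrow>w. count_list (g u) v)"
  by (induction w) auto

definition sign_alternating :: "nat \<Rightarrow> 'c::comm_ring_1 fa \<Rightarrow> bool" where
  "sign_alternating N g \<longleftrightarrow>
     (\<forall>\<pi> u. \<pi> permutes {1..N} \<longrightarrow> g (map (rename_x \<pi>) u) = of_int (sign \<pi>) * g u)"

lemma sign_alternatingD:
  "sign_alternating N g \<Longrightarrow> \<pi> permutes {1..N} \<Longrightarrow> g (map (rename_x \<pi>) u) = of_int (sign \<pi>) * g u"
  by (simp add: sign_alternating_def)

lemma of_int_sign_square: "of_int (sign \<pi>) * (of_int (sign \<pi>) * x) = (x :: 'c::comm_ring_1)"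
  by (simp flip: mult.assoc of_int_mult)

lemma sign_alternating_zero_iff:
  assumes "sign_alternating N g" "\<pi> permutes {1..N}"
  shows "g (map (rename_x \<pi>) u) = 0 \<longleftrightarrow> g u = 0"
  using sign_alternatingD[OF assms] of_int_sign_square[of \<pi> "g u"] by auto

lemma alternating_imp_sign_alternating:
  fixes f :: "'c::comm_ring_1 fa"
  assumes "fpoly f" and "alternating n f"
  shows "sign_alternating n f"
  unfolding sign_alternating_def
proof (intro allI impI)
  fix \<pi> u
  assume "\<pi> permutes {1..n}"
  then show "f (map (rename_x \<pi>) u) = of_int (sign \<pi>) * f u"
    using finite_atLeastAtMost
  proof (induction \<pi> arbitrary: u rule: permutes_induct)
    case id then show ?case by (simp add: id_def)
  next
    case (swap i j p)
    have "f (map (rename_x (transpose i j)) w) = - f w" for w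
    proof -
      have "fsubst (\<lambda>v. fmon [rename_x (transpose i j) v]) f w = f (map (rename_x (transpose i j)) w)"
        by (rule fsubst_involution[OF assms(1) rename_x_transpose_involution])
      with assms(2) swap(1-3) show ?thesis
        by (simp add: alternating_def swapx_eq_rename_x fun_eq_iff)
    qed
    moreover have "map (rename_x (transpose i j \<circ> p)) u = map (rename_x (transpose i j)) (map (rename_x p) u)"
      by (simp add: rename_x_comp)
    ultimately have f_eq: "f (map (rename_x (transpose i j \<circ> p)) u) = - (of_int (sign p) * f u)"
      using swap.IH by (simp only:)
    have sign_eq: "sign (transpose i j \<circ> p) = - sign p"
      using swap(3) permutes_imp_permutation[OF finite_atLeastAtMost \<open>p permutes {1..n}\<close>]
      by (simp add: sign_compose permutation_swap_id sign_swap_id)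
    show ?case
      unfolding f_eq sign_eq by simp
  qed
qed

lemma bij_betw_rename_x_support:
  assumes "sign_alternating N f" "\<pi> permutes {1..N}"
  shows "bij_betw (map (rename_x \<pi>)) {w. f w \<noteq> 0} {w. f w \<noteq> 0}"
proof -
  have "w \<in> map (rename_x \<pi>) ` {w. f w \<noteq> 0}" if "f w \<noteq> 0" for w
  proof
    show "w = map (rename_x \<pi>) (map (rename_x (inv \<pi>)) w)"
      by (simp add: rename_x_inverse_comp[OF assms(2)])
    show "map (rename_x (inv \<pi>)) w \<in> {w. f w \<noteq> 0}"
      using that sign_alternating_zero_iff[OF assms(1) permutes_inv[OF assms(2)]] by simp
  qed
  moreover have "inj (map (rename_x \<pi>))"
    by (intro inj_mapI inj_rename_x permutes_inj[OF assms(2)])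
  moreover have "map (rename_x \<pi>) ` {w. f w \<noteq> 0} \<subseteq> {w. f w \<noteq> 0}"
    using sign_alternating_zero_iff[OF assms] by blast
  ultimately show ?thesis
    unfolding bij_betw_def by (blast intro: inj_on_subset)
qed

lemma bind_map_rename_x:
  "(\<And>v. map (rename_x \<pi>) (g v) = g (rename_x \<pi> v)) \<Longrightarrow>
     List.bind (map (rename_x \<pi>) w) g = map (rename_x \<pi>) (List.bind w g)"
  by (induction w) auto

lemma sign_alternating_fsubst_fmon:
  fixes f :: "'c::comm_ring_1 fa"
  assumes f: "fpoly f" "sign_alternating n f"
    and g: "\<And>\<pi> v. \<pi> permutes {1..n} \<Longrightarrow> map (rename_x \<pi>) (g v) = g (rename_x \<pi> v)"
  shows "sign_alternating n (fsubst (\<lambda>v. fmon (g v)) f)"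
  unfolding sign_alternating_def
proof (intro allI impI)
  fix \<pi> u
  assume \<pi>: "\<pi> permutes {1..n}"
  define \<rho> where "\<rho> = inv \<pi>"
  have \<rho>: "\<rho> permutes {1..n}" unfolding \<rho>_def using permutes_inv[OF \<pi>] .
  let ?F = "\<lambda>w. f w * fmon (List.bind w g) u"
  have "fmon (List.bind w g) (map (rename_x \<pi>) u) = fmon (List.bind (map (rename_x \<rho>) w) g) u" for w
  proof -
    have "List.bind (map (rename_x \<rho>) w) g = map (rename_x \<rho>) (List.bind w g)"
      by (rule bind_map_rename_x) (rule g[OF \<rho>])
    then show ?thesis
      by (simp add: fmon_apply \<rho>_def map_rename_x_eq_iff[OF \<pi>])
  qed
  moreover have "f w = of_int (sign \<pi>) * f (map (rename_x \<rho>) w)" for w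
    using sign_alternatingD[OF f(2) \<rho>] sign_inverse[OF permutes_imp_permutation[OF _ \<pi>]]
    by (simp add: \<rho>_def of_int_sign_square)
  ultimately have "f w * fmon (List.bind w g) (map (rename_x \<pi>) u) = of_int (sign \<pi>) * ?F (map (rename_x \<rho>) w)"
    for w by (metis mult.assoc)
  then have "fsubst (\<lambda>v. fmon (g v)) f (map (rename_x \<pi>) u)
      = of_int (sign \<pi>) * (\<Sum>w\<in>{w. f w \<noteq> 0}. ?F (map (rename_x \<rho>) w))"
    by (simp add: fsubst_fmon_eq_fcomb[OF f(1)] fcomb_def sum_distrib_left)
  also have "(\<Sum>w\<in>{w. f w \<noteq> 0}. ?F (map (rename_x \<rho>) w)) = (\<Sum>w\<in>{w. f w \<noteq> 0}. ?F w)"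
    by (rule sum.reindex_bij_betw[OF bij_betw_rename_x_support[OF f(2) \<rho>]])
  finally show "fsubst (\<lambda>v. fmon (g v)) f (map (rename_x \<pi>) u)
      = of_int (sign \<pi>) * fsubst (\<lambda>v. fmon (g v)) f u"
    by (simp add: fsubst_fmon_eq_fcomb[OF f(1)] fcomb_def)
qed

lemma multilinear_fsubst_fmon:
  assumes "fpoly f" "multilinear N f"
    and "\<And>v i. i \<in> {1..N} \<Longrightarrow> count_list (g v) (X i) = count_list [v] (X i)"
  shows "multilinear N (fsubst (\<lambda>v. fmon (g v)) f)"
  unfolding multilinear_def
proof (intro allI impI ballI)
  fix u i
  assume "fsubst (\<lambda>v. fmon (g v)) f u \<noteq> 0" "i \<in> {1..N}"
  moreover obtain w where "f w \<noteq> 0" "List.bind w g = u"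
    using fsubst_fmon_nonzero[OF assms(1) calculation(1)] by blast
  moreover have "count_list (List.bind w g) (X i) = count_list (List.bind w (\<lambda>v. [v])) (X i)"
    unfolding count_list_bind using assms(3)[OF calculation(2)] by simp
  ultimately show "count_list u (X i) = 1"
    using assms(2) by (simp add: multilinear_def)
qed

definition antisym_last :: "nat \<Rightarrow> 'c::comm_ring_1 fa \<Rightarrow> 'c fa" where
  "antisym_last N h = (\<lambda>u. \<Sum>k\<in>{1..N}.
     of_int (sign (transpose k N)) * h (map (rename_x (transpose k N)) u))"

lemma permutes_atLeastAtMost_Suc_fixed:
  "p permutes {1..Suc n} \<Longrightarrow> p (Suc n) = Suc n \<Longrightarrow> p permutes {1..n}"
  unfolding permutes_def by (metis atLeastAtMost_iff le_Suc_eq)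

lemma sign_alternating_antisym_last:
  fixes h :: "'c::comm_ring_1 fa"
  assumes h: "sign_alternating n h"
  shows "sign_alternating (Suc n) (antisym_last (Suc n) h)"
  unfolding sign_alternating_def
proof (intro allI impI)
  fix \<pi> u
  assume \<pi>: "\<pi> permutes {1..Suc n}"
  let ?N = "Suc n"
  let ?G = "\<lambda>k. of_int (sign (transpose k ?N)) * h (map (rename_x (transpose k ?N)) u)"
  have summand: "of_int (sign (transpose k ?N)) * h (map (rename_x (transpose k ?N)) (map (rename_x \<pi>) u))
      = of_int (sign \<pi>) * ?G (inv \<pi> k)"
    if k: "k \<in> {1..?N}" for k
  proof -
    define k' where "k' = inv \<pi> k"
    have k': "k' \<in> {1..?N}" "\<pi> k' = k"
      using k permutes_in_image[OF permutes_inv[OF \<pi>]] permutes_inverses(1)[OF \<pi>]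
      by (auto simp: k'_def)
    define \<rho> where "\<rho> = transpose k ?N \<circ> \<pi> \<circ> transpose k' ?N"
    \<comment> \<open>\<rho> fixes x_{n+1}, so it only permutes the first n variables, where h is alternating.\<close>
    have "\<rho> permutes {1..?N}"
      unfolding \<rho>_def by (intro permutes_compose permutes_swap_id \<pi> k k') simp_all
    then have \<rho>_perm: "\<rho> permutes {1..n}"
      by (rule permutes_atLeastAtMost_Suc_fixed) (simp add: \<rho>_def k')
    have "transpose k ?N \<circ> \<pi> = \<rho> \<circ> transpose k' ?N"
      by (simp add: \<rho>_def o_assoc[symmetric])
    then have map_eq: "map (rename_x (transpose k ?N)) (map (rename_x \<pi>) u)
        = map (rename_x \<rho>) (map (rename_x (transpose k' ?N)) u)"
      by (simp flip: rename_x_comp)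
    have h_eq: "h (map (rename_x (transpose k ?N)) (map (rename_x \<pi>) u))
        = of_int (sign \<rho>) * h (map (rename_x (transpose k' ?N)) u)"
      unfolding map_eq by (rule sign_alternatingD[OF h \<rho>_perm])
    have sign_eq: "sign (transpose k ?N) * sign \<rho> = sign \<pi> * sign (transpose k' ?N)"
      using permutes_imp_permutation[OF _ \<pi>]
      by (simp add: \<rho>_def sign_compose permutation_swap_id permutation_compose mult.assoc)
    show ?thesis
      unfolding h_eq k'_def[symmetric] mult.assoc[symmetric] of_int_mult[symmetric] sign_eq ..
  qed
  have "antisym_last ?N h (map (rename_x \<pi>) u) = of_int (sign \<pi>) * (\<Sum>k\<in>{1..?N}. ?G (inv \<pi> k))"
    unfolding antisym_last_def sum_distrib_left by (rule sum.cong[OF refl summand])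
  also have "(\<Sum>k\<in>{1..?N}. ?G (inv \<pi> k)) = (\<Sum>k\<in>{1..?N}. ?G k)"
    by (rule sum.reindex_bij_betw[OF permutes_imp_bij[OF permutes_inv[OF \<pi>]]])
  finally show "antisym_last ?N h (map (rename_x \<pi>) u) = of_int (sign \<pi>) * antisym_last ?N h u"
    by (simp add: antisym_last_def)
qed

lemma multilinear_antisym_last:
  assumes "multilinear N h"
  shows "multilinear N (antisym_last N h)"
  unfolding multilinear_def
proof (intro allI impI ballI)
  fix u i
  assume "antisym_last N h u \<noteq> 0" "i \<in> {1..N}"
  then obtain k where k: "k \<in> {1..N}" "h (map (rename_x (transpose k N)) u) \<noteq> 0"
    unfolding antisym_last_def by (force dest: sum.not_neutral_contains_not_neutral)
  have "transpose k N permutes {1..N}"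
    using k(1) by (intro permutes_swap_id) auto
  then have "transpose k N i \<in> {1..N}"
    using \<open>i \<in> {1..N}\<close> by (rule permutes_in_image[THEN iffD2])
  then have "count_list (map (rename_x (transpose k N)) u) (X (transpose k N i)) = 1"
    using assms k(2) by (simp add: multilinear_def)
  then show "count_list u (X i) = 1"
    by (simp only: count_list_rename_x[OF inj_transpose])
qed

lemma antisym_last_eq_fsubst:
  assumes "fpoly h"
  shows "antisym_last N h = (\<lambda>u. \<Sum>k\<in>{1..N}.
     of_int (sign (transpose k N)) * fsubst (\<lambda>v. fmon [rename_x (transpose k N) v]) h u)"
  by (simp add: antisym_last_def fsubst_involution[OF assms rename_x_transpose_involution])

lemma fpoly_antisym_last:
  assumes "fpoly h"
  shows "fpoly (antisym_last N h)"
proof -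
  have "{u. antisym_last N h u \<noteq> 0}
      \<subseteq> (\<Union>k\<in>{1..N}. {u. fsubst (\<lambda>v. fmon [rename_x (transpose k N) v]) h u \<noteq> 0})"
    unfolding antisym_last_eq_fsubst[OF assms]
    by (force dest: sum.not_neutral_contains_not_neutral)
  moreover have "finite (\<Union>k\<in>{1..N}. {u. fsubst (\<lambda>v. fmon [rename_x (transpose k N) v]) h u \<noteq> 0})"
    using fpoly_fsubst_fmon[OF assms] by (simp add: fpoly_def)
  ultimately show ?thesis
    unfolding fpoly_def by (rule finite_subset)
qed

section \<open>Alternating multilinear polynomials lie in CAP\<close>

fun x_indices :: "nat \<Rightarrow> var list \<Rightarrow> nat list" where
  "x_indices N [] = []"
| "x_indices N (X i # w) = (if i \<in> {1..N} then i # x_indices N w else x_indices N w)"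
| "x_indices N (v # w) = x_indices N w"

lemma x_indices_rename_x:
  assumes "\<pi> permutes {1..N}"
  shows "x_indices N (map (rename_x \<pi>) w) = map \<pi> (x_indices N w)"
proof (induction w)
  case (Cons v w)
  then show ?case using permutes_in_image[OF assms] by (cases v) auto
qed simp

lemma rename_x_x_indices_Nil:
  assumes "\<pi> permutes {1..N}" "x_indices N w = []"
  shows "map (rename_x \<pi>) w = w"
  using assms(2)
proof (induction w)
  case (Cons v w)
  then show ?case using permutes_not_in[OF assms(1)] by (cases v) (auto split: if_splits)
qed simp

lemma count_list_x_indices: "i \<in> {1..N} \<Longrightarrow> count_list (x_indices N w) i = count_list w (X i)"
  by (induction N w rule: x_indices.induct) auto

lemma set_x_indices: "set (x_indices N w) \<subseteq> {1..N}"
  by (induction N w rule: x_indices.induct) auto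

lemma x_indices_multilinear:
  assumes "\<And>i. i \<in> {1..N} \<Longrightarrow> count_list w (X i) = 1"
  shows "distinct (x_indices N w)" "set (x_indices N w) = {1..N}" "length (x_indices N w) = N"
proof -
  show set_eq: "set (x_indices N w) = {1..N}"
    using set_x_indices count_list_x_indices[of _ N w] assms
    by (metis One_nat_def count_notin subsetI subset_antisym zero_neq_one)
  show "length (x_indices N w) = N"
    using sum_count_set[OF set_x_indices finite_atLeastAtMost, of N w]
    by (simp add: count_list_x_indices assms)
  then show "distinct (x_indices N w)"
    by (intro card_distinct) (simp add: set_eq)
qed

lemma permutes_of_distinct_list:
  assumes "distinct xs" "set xs = {1..length xs}"
  shows "\<exists>\<pi>. \<pi> permutes {1..length xs} \<and> map \<pi> [1..<Suc (length xs)] = xs"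
proof -
  define \<pi> where "\<pi> i = (if i \<in> {1..length xs} then xs ! (i - 1) else i)" for i
  have "inj_on \<pi> {1..length xs}"
    using assms(1) by (auto simp: inj_on_def \<pi>_def nth_eq_iff_index_eq)
  moreover have "\<pi> i \<in> {1..length xs}" if "i \<in> {1..length xs}" for i
    using that assms(2) nth_mem[of "i - 1" xs] by (auto simp: \<pi>_def)
  ultimately have "\<pi> permutes {1..length xs}"
    by (intro inj_imp_permutes) (auto simp: \<pi>_def)
  moreover have "map \<pi> [1..<Suc (length xs)] = xs"
    by (rule nth_equalityI) (auto simp: \<pi>_def nth_upt simp del: upt_Suc)
  ultimately show ?thesis by blast
qed

lemma x_indices_decomposition:
  "\<exists>a ss. w = a @ concat (map2 (\<lambda>i s. X i # s) (x_indices N w) ss)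
      \<and> length ss = length (x_indices N w) \<and> x_indices N a = [] \<and> (\<forall>s\<in>set ss. x_indices N s = [])"
proof (induction w)
  case (Cons v w)
  then obtain a ss where IH: "w = a @ concat (map2 (\<lambda>i s. X i # s) (x_indices N w) ss)"
    "length ss = length (x_indices N w)" "x_indices N a = []" "\<forall>s\<in>set ss. x_indices N s = []"
    by blast
  show ?case
  proof (cases "\<exists>i\<in>{1..N}. v = X i")
    case True
    with IH show ?thesis by (intro exI[of _ "[]"] exI[of _ "a # ss"]) auto
  next
    case False
    then have "x_indices N (v # u) = x_indices N u" for u
      by (cases v) auto
    with IH show ?thesis by (intro exI[of _ "v # a"] exI[of _ ss]) auto
  qed
qed simp

definition signed_orbit :: "nat \<Rightarrow> var list \<Rightarrow> 'c::comm_ring_1 fa" where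
  "signed_orbit N u = fcomb {\<pi>. \<pi> permutes {1..N}} (\<lambda>\<pi>. of_int (sign \<pi>)) (\<lambda>\<pi>. map (rename_x \<pi>) u)"

lemma fcap_eq_fcomb:
  "fcap N (\<lambda>i. fmon [X i]) (\<lambda>i. fmon [Y i])
     = fcomb {\<pi>. \<pi> permutes {1..N}} (\<lambda>\<pi>. of_int (sign \<pi>)) (\<lambda>\<pi>. concat (map (\<lambda>i. [X (\<pi> i), Y i]) [1..<N+1]))"
proof -
  have fprod: "fprod_list (concat (map (\<lambda>i. [fmon [X (\<pi> i)], fmon [Y i]]) L))
      = fmon (concat (map (\<lambda>i. [X (\<pi> i), Y i]) L))" for \<pi> L
    using fprod_list_fmon[of "\<lambda>v. [v]" "concat (map (\<lambda>i. [X (\<pi> i), Y i]) L)"]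
    by (simp add: map_concat comp_def)
  show ?thesis
    unfolding fcap_def fcomb_def fprod ..
qed

(* A word u with x_indices N u = [1..<Suc N] has the form a x_1 s_1 ... x_N s_N with a and the s_i
   free of x_1, ..., x_N; its signed orbit is a * Cap_N(x; s_1, ..., s_N). *)
lemma signed_orbit_in_CAP:
  assumes "x_indices N u = [1..<Suc N]"
  shows "signed_orbit N u \<in> CAP N"
proof -
  obtain a ss where u: "u = a @ concat (map2 (\<lambda>i s. X i # s) [1..<Suc N] ss)"
    and ss: "length ss = N" "x_indices N a = []" "\<forall>s\<in>set ss. x_indices N s = []"
    using x_indices_decomposition[of u N] assms by auto
  have "map2 (\<lambda>i s. X i # s) [1..<Suc N] ss = map (\<lambda>i. X i # ss ! (i - 1)) [1..<Suc N]"
    using ss(1) by (intro nth_equalityI) (auto simp del: upt_Suc)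
  with u have u: "u = a @ concat (map (\<lambda>i. X i # ss ! (i - 1)) [1..<Suc N])"
    by simp
  define seg where "seg v = (case v of Y i \<Rightarrow> ss ! (i - 1) | _ \<Rightarrow> [v])" for v
  have orbit_word: "map (rename_x \<pi>) u = a @ List.bind (concat (map (\<lambda>i. [X (\<pi> i), Y i]) [1..<N+1])) seg"
    if "\<pi> permutes {1..N}" for \<pi>
  proof -
    have bind_seg: "List.bind (concat (map (\<lambda>i. [X (\<pi> i), Y i]) L)) seg
        = concat (map (\<lambda>i. X (\<pi> i) # ss ! (i - 1)) L)" for L
      by (induction L) (simp_all add: seg_def)
    have segs_fixed: "map (\<lambda>i. X (\<pi> i) # map (rename_x \<pi>) (ss ! (i - 1))) [1..<Suc N]
        = map (\<lambda>i. X (\<pi> i) # ss ! (i - 1)) [1..<Suc N]"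
      using ss(1,3) by (auto intro!: rename_x_x_indices_Nil[OF that] simp del: upt_Suc)
    have "map (rename_x \<pi>) u
        = map (rename_x \<pi>) a @ concat (map (\<lambda>i. X (\<pi> i) # map (rename_x \<pi>) (ss ! (i - 1))) [1..<Suc N])"
      by (simp add: u map_concat comp_def del: upt_Suc)
    then show ?thesis
      by (simp only: Suc_eq_plus1[symmetric] segs_fixed bind_seg rename_x_x_indices_Nil[OF that ss(2)])
  qed
  then have "signed_orbit N u
      = fcomb {\<pi>. \<pi> permutes {1..N}} (\<lambda>\<pi>. of_int (sign \<pi>))
          (\<lambda>\<pi>. a @ List.bind (concat (map (\<lambda>i. [X (\<pi> i), Y i]) [1..<N+1])) seg)"
    unfolding signed_orbit_def fcomb_def by (intro ext sum.cong refl) simp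
  also have "\<dots> = fmul (fmon a) (fsubst (\<lambda>v. fmon (seg v)) (fcap N (\<lambda>i. fmon [X i]) (\<lambda>i. fmon [Y i])))"
    unfolding fcap_eq_fcomb fsubst_fmon_fcomb[OF finite_permutations[OF finite_atLeastAtMost]]
      fmul_fmon_fcomb ..
  also have "\<dots> \<in> CAP N"
    unfolding CAP_def by (intro tideal.lmul tideal.subst tideal.gen) (simp_all add: fpoly_fmon)
  finally show ?thesis .
qed

lemma standard_word_exists:
  assumes "\<And>i. i \<in> {1..N} \<Longrightarrow> count_list v (X i) = 1"
  shows "\<exists>u \<pi>. \<pi> permutes {1..N} \<and> x_indices N u = [1..<Suc N] \<and> map (rename_x \<pi>) u = v"
proof -
  note xs = x_indices_multilinear[of N v, OF assms]
  obtain \<pi> where \<pi>: "\<pi> permutes {1..N}" "map \<pi> [1..<Suc N] = x_indices N v"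
    using permutes_of_distinct_list[OF xs(1)] xs(2,3) by (auto simp del: upt_Suc)
  have "x_indices N (map (rename_x (inv \<pi>)) v) = [1..<Suc N]"
    by (simp add: x_indices_rename_x[OF permutes_inv[OF \<pi>(1)]] permutes_inv_o(2)[OF \<pi>(1)]
        del: upt_Suc flip: \<pi>(2))
  moreover have "map (rename_x \<pi>) (map (rename_x (inv \<pi>)) v) = v"
    by (simp add: rename_x_inverse_comp[OF \<pi>(1)])
  ultimately show ?thesis
    using \<pi>(1) by blast
qed

lemma standard_word_unique:
  assumes "\<pi> permutes {1..N}" "\<pi>' permutes {1..N}"
    and "x_indices N u = [1..<Suc N]" "x_indices N u' = [1..<Suc N]"
    and "map (rename_x \<pi>) u = map (rename_x \<pi>') u'"
  shows "\<pi> = \<pi>' \<and> u = u'"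
proof -
  have "map \<pi> [1..<Suc N] = map \<pi>' [1..<Suc N]"
    using arg_cong[OF assms(5), of "x_indices N"] assms(3,4)
    by (simp add: x_indices_rename_x[OF assms(1)] x_indices_rename_x[OF assms(2)])
  then have "\<pi> i = \<pi>' i" for i
    using permutes_not_in[OF assms(1)] permutes_not_in[OF assms(2)]
    by (cases "i \<in> {1..N}") (auto simp del: upt_Suc)
  then have "\<pi> = \<pi>'" ..
  moreover have "inj (map (rename_x \<pi>))"
    by (intro inj_mapI inj_rename_x permutes_inj[OF assms(1)])
  ultimately show ?thesis
    using assms(5) by (auto dest: injD)
qed

lemma sign_alternating_in_CAP:
  fixes g :: "'c::comm_ring_1 fa"
  assumes g: "fpoly g" "multilinear N g" "sign_alternating N g"
  shows "g \<in> CAP N"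
proof -
  \<comment> \<open>(u, \<pi>) \<mapsto> map (rename_x \<pi>) u maps Std \<times> Perms bijectively onto the support of g.\<close>
  define Std where "Std = {u. g u \<noteq> 0 \<and> x_indices N u = [1..<Suc N]}"
  define Perms where "Perms = {\<pi>. \<pi> permutes {1..N}}"
  have "finite Std"
    using g(1) by (auto simp: fpoly_def Std_def intro: finite_subset)
  have "(\<Sum>u\<in>Std. g u * signed_orbit N u v) = g v" for v
  proof -
    have "(\<Sum>u\<in>Std. g u * signed_orbit N u v)
        = (\<Sum>(u, \<pi>)\<in>Std \<times> Perms. if map (rename_x \<pi>) u = v then g v else 0)"
      unfolding signed_orbit_def fcomb_def sum_distrib_left sum.cartesian_product Perms_def
      by (intro sum.cong refl) (auto simp: fmon_apply sign_alternatingD[OF g(3)] mult.commute)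
    also have "\<dots> = g v"
    proof (cases "g v = 0")
      case False
      then obtain u0 \<pi>0 where std: "\<pi>0 permutes {1..N}" "x_indices N u0 = [1..<Suc N]"
        "map (rename_x \<pi>0) u0 = v"
        using standard_word_exists g(2) by (metis multilinear_def)
      then have "g u0 \<noteq> 0"
        using False sign_alternating_zero_iff[OF g(3)] by blast
      with std have mem: "(u0, \<pi>0) \<in> Std \<times> Perms"
        by (simp add: Std_def Perms_def)
      have "map (rename_x (snd p)) (fst p) = v \<longleftrightarrow> p = (u0, \<pi>0)" if "p \<in> Std \<times> Perms" for p
        using that std standard_word_unique[of "snd p" N \<pi>0 "fst p" u0]
        by (auto simp: Std_def Perms_def)
      then have "(\<Sum>(u, \<pi>)\<in>Std \<times> Perms. if map (rename_x \<pi>) u = v then g v else 0)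
          = (\<Sum>p\<in>Std \<times> Perms. if p = (u0, \<pi>0) then g v else 0)"
        by (intro sum.cong refl) (simp add: split_def)
      also have "\<dots> = g v"
        using mem \<open>finite Std\<close> finite_permutations[of "{1..N}"] by (simp add: Perms_def sum.delta')
      finally show ?thesis .
    qed (auto intro!: sum.neutral)
    finally show ?thesis .
  qed
  then have "g = (\<lambda>v. \<Sum>u\<in>Std. g u * signed_orbit N u v)"
    by (simp add: fun_eq_iff)
  also have "\<dots> \<in> CAP N"
    using signed_orbit_in_CAP \<open>finite Std\<close> unfolding CAP_def Std_def
    by (intro tideal_sum tideal_smult) auto
  finally show ?thesis .
qed

section \<open>The alternating sum over subsets\<close>

definition z_before_last :: "nat \<Rightarrow> nat \<Rightarrow> var \<Rightarrow> var list" where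
  "z_before_last N m v = (if v = X N then replicate m Z @ [X N] else [v])"

definition z_before :: "nat set \<Rightarrow> var \<Rightarrow> var list" where
  "z_before S v = (case v of X i \<Rightarrow> if i \<in> S then [Z, X i] else [X i] | _ \<Rightarrow> [v])"

lemma bind_replicate_Z_z_before [simp]: "List.bind (replicate m Z) (z_before S) = replicate m Z"
  by (induction m) (simp_all add: z_before_def)

lemma antisym_last_z_before_last_in_CAP:
  fixes f :: "'c::comm_ring_1 fa"
  assumes f: "fpoly f" "multilinear (Suc n) f" "alternating n f"
  shows "antisym_last (Suc n) (fsubst (\<lambda>v. fmon (z_before_last (Suc n) m v)) f) \<in> CAP (Suc n)"
proof -
  let ?h = "fsubst (\<lambda>v. fmon (z_before_last (Suc n) m v)) f"
  have h: "fpoly ?h" "multilinear (Suc n) ?h" "sign_alternating n ?h"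
  proof -
    show "fpoly ?h" by (rule fpoly_fsubst_fmon[OF f(1)])
    show "multilinear (Suc n) ?h"
      by (rule multilinear_fsubst_fmon[OF f(1,2)]) (simp add: z_before_last_def)
    have "map (rename_x \<pi>) (z_before_last (Suc n) m v) = z_before_last (Suc n) m (rename_x \<pi> v)"
      if "\<pi> permutes {1..n}" for \<pi> v
      using permutes_not_in[OF that, of "Suc n"] permutes_inverses(2)[OF that]
      by (cases v) (auto simp: z_before_last_def, metis)
    then show "sign_alternating n ?h"
      by (intro sign_alternating_fsubst_fmon f(1) alternating_imp_sign_alternating f(3))
  qed
  show ?thesis
    by (intro sign_alternating_in_CAP fpoly_antisym_last multilinear_antisym_last
        sign_alternating_antisym_last h)
qed

definition coset_word :: "nat \<Rightarrow> nat set \<Rightarrow> nat \<Rightarrow> var \<Rightarrow> var list" where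
  "coset_word n S k v =
     List.bind (map (rename_x (transpose k (Suc n))) (z_before_last (Suc n) (n - card S) v)) (z_before S)"

lemma fsubst_z_before_antisym_last:
  assumes "fpoly f"
  shows "fsubst (\<lambda>v. fmon (z_before S v))
           (antisym_last (Suc n) (fsubst (\<lambda>v. fmon (z_before_last (Suc n) (n - card S) v)) f)) u
       = (\<Sum>k\<in>{1..Suc n}. of_int (sign (transpose k (Suc n))) * fsubst (\<lambda>v. fmon (coset_word n S k v)) f u)"
  unfolding antisym_last_eq_fsubst[OF fpoly_fsubst_fmon[OF assms]]
  by (subst fsubst_sum) (simp_all add: assms fpoly_fsubst_fmon fsubst_fmon_fsubst_fmon coset_word_def)

lemma delta_sub_eq_coset_word:
  assumes "S \<subseteq> {1..n}"
  shows "delta_sub n S (card S) = (\<lambda>v. fmon (coset_word n S (Suc n) v))"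
proof
  fix v
  have "Suc n \<notin> S" using assms by auto
  with assms show "delta_sub n S (card S) v = fmon (coset_word n S (Suc n) v)"
    by (cases v) (auto simp: delta_sub_def coset_word_def z_before_last_def z_before_def)
qed

(* For k <= n the k-th coset word puts z^(n-|S|) in front of x_k, and one more z if k is in S;
   so it does not matter whether k belongs to S. *)
lemma coset_word_Diff:
  assumes "S \<subseteq> {1..n}" "k \<in> {1..n}"
  shows "coset_word n S k = coset_word n (S - {k}) k"
proof
  fix v
  show "coset_word n S k v = coset_word n (S - {k}) k v"
  proof (cases "k \<in> S")
    case True
    have "finite S" using assms(1) finite_subset by blast
    then have "n - card (S - {k}) = Suc (n - card S)"
      using True card_mono[OF _ assms(1)] card_Diff_singleton[of k S] card_gt_0_iff[of S] by auto
    moreover have "Suc n \<notin> S" "k \<noteq> Suc n" using assms by auto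
    ultimately show ?thesis
      using True by (cases v) (auto simp: coset_word_def z_before_last_def z_before_def
          transpose_def replicate_append_same[symmetric])
  qed simp
qed

lemma sum_Pow_alternating_cancel:
  fixes \<phi> :: "'a set \<Rightarrow> 'c::comm_ring_1"
  assumes "finite A" "k \<in> A" "\<And>S. S \<subseteq> A \<Longrightarrow> \<phi> S = \<phi> (S - {k})"
  shows "(\<Sum>S\<in>Pow A. (-1) ^ card S * \<phi> S) = 0"
proof -
  define B where "B = A - {k}"
  have A: "A = insert k B" "k \<notin> B" "finite B" using assms(1,2) by (auto simp: B_def)
  have inj: "inj_on (insert k) (Pow B)"
    using A(2) by (auto simp: inj_on_def)
  have "(\<Sum>S\<in>Pow A. (-1) ^ card S * \<phi> S)
      = (\<Sum>S\<in>Pow B. (-1) ^ card S * \<phi> S) + (\<Sum>S\<in>insert k ` Pow B. (-1) ^ card S * \<phi> S)"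
    unfolding A(1) Pow_insert using A(2,3) by (intro sum.union_disjoint) auto
  also have "(\<Sum>S\<in>insert k ` Pow B. (-1) ^ card S * \<phi> S)
      = (\<Sum>S\<in>Pow B. (-1) ^ card (insert k S) * \<phi> (insert k S))"
    by (simp add: sum.reindex[OF inj])
  also have "(\<Sum>S\<in>Pow B. (-1) ^ card (insert k S) * \<phi> (insert k S)) = - (\<Sum>S\<in>Pow B. (-1) ^ card S * \<phi> S)"
    unfolding sum_negf[symmetric]
  proof (rule sum.cong[OF refl])
    fix S assume "S \<in> Pow B"
    then have "k \<notin> S" "finite S" "insert k S \<subseteq> A" "insert k S - {k} = S"
      using A finite_subset by auto
    then show "(-1) ^ card (insert k S) * \<phi> (insert k S) = - ((-1) ^ card S * \<phi> S)"
      using assms(3)[of "insert k S"] by simp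
  qed
  finally show ?thesis by simp
qed

lemma sum_by_card_Pow:
  assumes "finite A" "card A \<le> n"
  shows "(\<Sum>j\<le>n. \<Sum>S\<in>{S. S \<subseteq> A \<and> card S = j}. F S j) = (\<Sum>S\<in>Pow A. F S (card S))"
proof -
  have "(\<Sum>S\<in>Pow A. F S (card S)) = (\<Sum>j\<in>{..n}. \<Sum>S\<in>{S \<in> Pow A. card S = j}. F S (card S))"
    by (rule sum.group[symmetric])
       (use assms in \<open>auto intro: order.trans[OF card_mono[of A]] simp: finite_subset\<close>)
  also have "\<dots> = (\<Sum>j\<le>n. \<Sum>S\<in>{S. S \<subseteq> A \<and> card S = j}. F S j)"
    by (intro sum.cong refl) auto
  finally show ?thesis ..
qed

lemma alternating_sum_coset_terms:
  assumes "fpoly f"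
  shows "(\<Sum>S\<in>Pow {1..n}. (-1) ^ card S * fsubst (\<lambda>v. fmon (z_before S v))
           (antisym_last (Suc n) (fsubst (\<lambda>v. fmon (z_before_last (Suc n) (n - card S) v)) f)) u)
       = (\<Sum>S\<in>Pow {1..n}. (-1) ^ card S * fsubst (\<lambda>v. fmon (coset_word n S (Suc n) v)) f u)"
    (is "?lhs = ?rhs")
proof -
  let ?\<Phi> = "\<lambda>k. \<Sum>S\<in>Pow {1..n}. (-1) ^ card S * fsubst (\<lambda>v. fmon (coset_word n S k v)) f u"
  have "?lhs = (\<Sum>k\<in>{1..Suc n}. of_int (sign (transpose k (Suc n))) * ?\<Phi> k)"
    unfolding fsubst_z_before_antisym_last[OF assms] sum_distrib_left
    by (subst sum.swap) (simp add: mult.left_commute)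
  also have "\<dots> = ?\<Phi> (Suc n) + (\<Sum>k\<in>{1..n}. of_int (sign (transpose k (Suc n))) * ?\<Phi> k)"
    by (simp add: atLeastAtMostSuc_conv add.commute)
  also have "(\<Sum>k\<in>{1..n}. of_int (sign (transpose k (Suc n))) * ?\<Phi> k) = 0"
  proof (intro sum.neutral ballI)
    fix k :: nat
    assume "k \<in> {1..n}"
    then have "?\<Phi> k = 0"
      by (intro sum_Pow_alternating_cancel) (auto simp: coset_word_Diff[of _ n k])
    then show "of_int (sign (transpose k (Suc n))) * ?\<Phi> k = 0" by simp
  qed
  finally show ?thesis by simp
qed

theorem proposition2p9:
  fixes f :: "'c::comm_ring_1 fa" and n :: nat
  assumes "in_x_t (n+1) f"
    and "multilinear (n+1) f"
    and "alternating n f"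
  shows "(\<lambda>u. \<Sum>j\<le>n. (-1)^j *
            (\<Sum>S\<in>{S. S \<subseteq> {1..n} \<and> card S = j}. fsubst (delta_sub n S j) f u))
         \<in> CAP (n+1)"
proof -
  have f: "fpoly f" "multilinear (Suc n) f"
    using assms(1,2) by (simp_all add: in_x_t_def)
  define R where "R S = fsubst (\<lambda>v. fmon (z_before S v))
    (antisym_last (Suc n) (fsubst (\<lambda>v. fmon (z_before_last (Suc n) (n - card S) v)) f))" for S
  have R: "R S \<in> CAP (Suc n)" for S
    using antisym_last_z_before_last_in_CAP[OF f assms(3)] unfolding R_def CAP_def
    by (rule tideal.subst) (simp add: fpoly_fmon)
  have "(\<Sum>j\<le>n. (-1)^j * (\<Sum>S\<in>{S. S \<subseteq> {1..n} \<and> card S = j}. fsubst (delta_sub n S j) f u))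
      = (\<Sum>S\<in>Pow {1..n}. (-1) ^ card S * fsubst (delta_sub n S (card S)) f u)" for u
    using sum_by_card_Pow[of "{1..n}" n "\<lambda>S j. (-1) ^ j * fsubst (delta_sub n S j) f u"]
    by (simp add: sum_distrib_left)
  also have "\<dots> u = (\<Sum>S\<in>Pow {1..n}. (-1) ^ card S * R S u)" for u
    unfolding R_def alternating_sum_coset_terms[OF f(1)]
    by (intro sum.cong refl) (simp add: delta_sub_eq_coset_word)
  finally have "(\<lambda>u. \<Sum>j\<le>n. (-1)^j *
            (\<Sum>S\<in>{S. S \<subseteq> {1..n} \<and> card S = j}. fsubst (delta_sub n S j) f u))
      = (\<lambda>u. \<Sum>S\<in>Pow {1..n}. (-1) ^ card S * R S u)"
    by (rule ext)
  also have "\<dots> \<in> CAP (n+1)"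
    using R unfolding CAP_def by (intro tideal_sum tideal_smult) auto
  finally show ?thesis .
qed

end
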